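(* Let $\mathfrak G_{\mathbb N}$ be the infinite undirected graph with vertex set $\mathbb N$ and edges $\{a,a+1\}$ for all $a\in\mathbb N$. For all $a,b,c,d\in\mathbb N$, $$\mathfrak G_{\mathbb N}\models a:b::_P c:d\iff |a-b|=|c-d|.$$
   Context: For undirected graphs (edges are one- or two-element vertex sets, $uEv$ iff $\{u,v\}$ is an edge): path formulas $\pi_0(x,y):\equiv x=y$, $\pi_1(x,y):\equiv xEy$, $\pi_n(x,y):\equiv\exists z_1\ldots z_{n-1}(xEz_1\wedge\cdots\wedge z_{n-1}Ey)$ for $n\ge2$. Path type $\uparrow^P_{\mathfrak G}(a\to b)=\{\pi_n:\mathfrak G\models\pi_n(a,b)\}$; $\uparrow^P_{\mathfrak G}(a\to b:\cdot\, c\to d)=\uparrow^P_{\mathfrak G}(a\to b)\cap\uparrow^P_{\mathfrak G}(c\to d)$. A path formula is trivial iff it lies in $\uparrow^P_{\mathfrak G}(a\to b:\cdot\, c\to d)$ for all vertices $a,b,c,d$; $\emptyset_{\mathfrak G}$ is the set of these. $\mathfrak G\models a\to b:\cdot_P\, c\to d$ iff either $\uparrow^P_{\mathfrak G}(a\to b)\cup\uparrow^P_{\mathfrak G}(c\to d)$ consists only of trivial formulas, or $\uparrow^P_{\mathfrak G}(a\to b:\cdot\, c\to d)$ contains a non-trivial formula and for every vertex $d'$, $\emptyset_{\mathfrak G}\subsetneq\uparrow^P(a\to b:\cdot\, c\to d)\subseteq\uparrow^P(a\to b:\cdot\, c\to d')$ implies $\emptyset_{\mathfrak G}\subsetneq\uparrow^P(a\to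 b:\cdot\, c\to d')\subseteq\uparrow^P(a\to b:\cdot\, c\to d)$. $\mathfrak G\models a:b::_P c:d$ iff $\mathfrak G\models a\to b:\cdot_P\, c\to d$, $b\to a:\cdot_P\, d\to c$, $c\to d:\cdot_P\, a\to b$ and $d\to c:\cdot_P\, b\to a$. *)

theory Defs
  imports Main
begin

text \<open>An undirected graph on the vertex type 'a is given by a symmetric edge
relation E (uEv iff {u,v} is an edge). The path formula pi_n is identified with
its index n; walk E n x y means the graph satisfies pi_n(x,y).\<close>

fun walk :: "('a \<Rightarrow> 'a \<Rightarrow> bool) \<Rightarrow> nat \<Rightarrow> 'a \<Rightarrow> 'a \<Rightarrow> bool" where
  "walk E 0 x y = (x = y)"
| "walk E (Suc n) x y = (\<exists>z. E x z \<and> walk E n z y)"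

definition path_type :: "('a \<Rightarrow> 'a \<Rightarrow> bool) \<Rightarrow> 'a \<Rightarrow> 'a \<Rightarrow> nat set" where
  "path_type E a b = {n. walk E n a b}"

definition path_type2 :: "('a \<Rightarrow> 'a \<Rightarrow> bool) \<Rightarrow> 'a \<Rightarrow> 'a \<Rightarrow> 'a \<Rightarrow> 'a \<Rightarrow> nat set" where
  "path_type2 E a b c d = path_type E a b \<inter> path_type E c d"

definition trivial_formulas :: "('a \<Rightarrow> 'a \<Rightarrow> bool) \<Rightarrow> nat set" where
  "trivial_formulas E = {n. \<forall>a b c d. n \<in> path_type2 E a b c d}"

definition arrow_prop :: "('a \<Rightarrow> 'a \<Rightarrow> bool) \<Rightarrow> 'a \<Rightarrow> 'a \<Rightarrow> 'a \<Rightarrow> 'a \<Rightarrow> bool" where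
  "arrow_prop E a b c d \<longleftrightarrow>
     (path_type E a b \<union> path_type E c d \<subseteq> trivial_formulas E)
   \<or> ((\<exists>n \<in> path_type2 E a b c d. n \<notin> trivial_formulas E) \<and>
      (\<forall>d'. (trivial_formulas E \<subset> path_type2 E a b c d \<and>
              path_type2 E a b c d \<subseteq> path_type2 E a b c d')
          \<longrightarrow> (trivial_formulas E \<subset> path_type2 E a b c d' \<and>
              path_type2 E a b c d' \<subseteq> path_type2 E a b c d)))"

definition analogy :: "('a \<Rightarrow> 'a \<Rightarrow> bool) \<Rightarrow> 'a \<Rightarrow> 'a \<Rightarrow> 'a \<Rightarrow> 'a \<Rightarrow> bool" where
  "analogy E a b c d \<longleftrightarrow> arrow_prop E a b c d \<and> arrow_prop E b a d c
     \<and> arrow_prop E c d a b \<and> arrow_prop E d c b a"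

definition nat_line :: "nat \<Rightarrow> nat \<Rightarrow> bool" where
  "nat_line u v \<longleftrightarrow> v = u + 1 \<or> u = v + 1"

end

theory Submission
  imports Defs
begin

text \<open>In the line graph a walk of length n from a to b exists exactly when n \<ge> |a - b| and
  n has the parity of |a - b|, so the path type of (a, b) is the arithmetic progression
  |a - b|, |a - b| + 2, ...  No path formula is trivial, and two such progressions meet only if
  their starting points have equal parity, in which case they meet in the later one. Hence
  a \<rightarrow> b :\<cdot> c \<rightarrow> d holds iff |c - d| \<le> |a - b| with equal parity: the common part is then
  the whole path type of (a, b), while for |c - d| > |a - b| moving d to distance |a - b| from c
  strictly enlarges it. The four conditions of the analogy force |a - b| = |c - d|.\<close>

lemma trivial_formulas_subset_path_type:
  "trivial_formulas E \<subseteq> path_type E a b"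
  by (auto simp: trivial_formulas_def path_type2_def)

lemma arrow_prop_iff_maximal:
  assumes "trivial_formulas E = {}" and "path_type E a b \<noteq> {}"
  shows "arrow_prop E a b c d \<longleftrightarrow> path_type2 E a b c d \<noteq> {} \<and>
    (\<forall>d'. path_type2 E a b c d \<subseteq> path_type2 E a b c d' \<longrightarrow>
          path_type2 E a b c d' \<subseteq> path_type2 E a b c d)"
  using assms unfolding arrow_prop_def by blast

definition parity_ray :: "nat \<Rightarrow> nat set" where
  "parity_ray k = {n. k \<le> n \<and> even (n + k)}"

lemma start_in_parity_ray: "k \<in> parity_ray k"
  by (simp add: parity_ray_def)

lemma parity_ray_Int:
  "parity_ray k \<inter> parity_ray m = (if even (k + m) then parity_ray (max k m) else {})"
  by (auto simp: parity_ray_def max_def)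

lemma parity_ray_subset_iff:
  "parity_ray k \<subseteq> parity_ray j \<longleftrightarrow> j \<le> k \<and> even (k + j)"
  by (auto simp: parity_ray_def)

definition nat_dist :: "nat \<Rightarrow> nat \<Rightarrow> nat" where
  "nat_dist a b = max a b - min a b"

lemma int_nat_dist: "int (nat_dist a b) = \<bar>int a - int b\<bar>"
  by (simp add: nat_dist_def)

lemma nat_dist_commute: "nat_dist a b = nat_dist b a"
  by (simp add: nat_dist_def)

lemma nat_dist_add_right: "nat_dist c (c + k) = k"
  by (simp add: nat_dist_def)

lemma nat_dist_nat_line:
  assumes "nat_line a z"
  shows "nat_dist a b = Suc (nat_dist z b) \<or> nat_dist z b = Suc (nat_dist a b)"
  using assms by (auto simp: nat_line_def nat_dist_def)

lemma Suc_mem_parity_ray_iff: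
  "Suc n \<in> parity_ray (Suc k) \<longleftrightarrow> n \<in> parity_ray k"
  by (simp add: parity_ray_def)

lemma walk_Suc_nat_line_iff:
  "(\<exists>z. nat_line a z \<and> n \<in> parity_ray (nat_dist z b)) \<longleftrightarrow> Suc n \<in> parity_ray (nat_dist a b)"
proof
  assume "\<exists>z. nat_line a z \<and> n \<in> parity_ray (nat_dist z b)"
  then obtain z where "nat_line a z" and ray: "n \<in> parity_ray (nat_dist z b)"
    by blast
  then consider "nat_dist a b = Suc (nat_dist z b)" | "nat_dist z b = Suc (nat_dist a b)"
    using nat_dist_nat_line by blast
  then show "Suc n \<in> parity_ray (nat_dist a b)"
    using ray by cases (auto simp: parity_ray_def)
next
  assume ray: "Suc n \<in> parity_ray (nat_dist a b)"
  show "\<exists>z. nat_line a z \<and> n \<in> parity_ray (nat_dist z b)"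
  proof (cases "a = b")
    case True
    then have "n \<in> parity_ray (nat_dist (Suc a) b)"
      using ray odd_pos[of n] by (simp add: parity_ray_def nat_dist_def)
    then show ?thesis
      by (auto simp: nat_line_def)
  next
    case False
    define z where "z = (if a < b then Suc a else a - 1)"
    have "nat_line a z" and "nat_dist a b = Suc (nat_dist z b)"
      using False by (auto simp: z_def nat_line_def nat_dist_def)
    then show ?thesis
      using ray Suc_mem_parity_ray_iff by metis
  qed
qed

lemma walk_nat_line_iff: "walk nat_line n a b \<longleftrightarrow> n \<in> parity_ray (nat_dist a b)"
proof (induction n arbitrary: a)
  case 0
  then show ?case
    by (auto simp: parity_ray_def nat_dist_def)
next
  case (Suc n)
  then show ?case
    using walk_Suc_nat_line_iff by simp
qed

lemma path_type_nat_line: "path_type nat_line a b = parity_ray (nat_dist a b)"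
  by (simp add: path_type_def walk_nat_line_iff)

lemma trivial_formulas_nat_line: "trivial_formulas nat_line = {}"
proof -
  have "n \<notin> path_type nat_line 0 (Suc n)" for n
    by (simp add: path_type_nat_line parity_ray_def nat_dist_def)
  then have "n \<notin> trivial_formulas nat_line" for n
    using trivial_formulas_subset_path_type[of nat_line 0 "Suc n"] by blast
  then show ?thesis
    by blast
qed

lemma arrow_prop_nat_line_iff:
  "arrow_prop nat_line a b c d \<longleftrightarrow>
     nat_dist c d \<le> nat_dist a b \<and> even (nat_dist a b + nat_dist c d)"
  (is "_ \<longleftrightarrow> ?m \<le> ?k \<and> even (?k + ?m)")
proof -
  have pt2: "path_type2 nat_line a b c d' = parity_ray ?k \<inter> parity_ray (nat_dist c d')" for d'
    by (simp add: path_type2_def path_type_nat_line)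
  have nonempty: "path_type nat_line a b \<noteq> {}"
    using start_in_parity_ray by (auto simp: path_type_nat_line)
  have maximal: "arrow_prop nat_line a b c d \<longleftrightarrow> parity_ray ?k \<inter> parity_ray ?m \<noteq> {} \<and>
      (\<forall>d'. parity_ray ?k \<inter> parity_ray ?m \<subseteq> parity_ray ?k \<inter> parity_ray (nat_dist c d') \<longrightarrow>
            parity_ray ?k \<inter> parity_ray (nat_dist c d') \<subseteq> parity_ray ?k \<inter> parity_ray ?m)"
    by (simp only: arrow_prop_iff_maximal[OF trivial_formulas_nat_line nonempty] pt2)
  show ?thesis
  proof
    assume "arrow_prop nat_line a b c d"
    then have nonempty_Int: "parity_ray ?k \<inter> parity_ray ?m \<noteq> {}"
      and maximality: "\<And>d'. parity_ray ?k \<inter> parity_ray ?m \<subseteq> parity_ray ?k \<inter> parity_ray (nat_dist c d')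
        \<Longrightarrow> parity_ray ?k \<inter> parity_ray (nat_dist c d') \<subseteq> parity_ray ?k \<inter> parity_ray ?m"
      unfolding maximal by blast+
    from nonempty_Int have even: "even (?k + ?m)"
      by (simp add: parity_ray_Int split: if_splits)
    \<comment> \<open>compare with d' = c + k, at the same distance from c as b from a\<close>
    have "parity_ray ?k \<inter> parity_ray ?m \<subseteq> parity_ray ?k \<inter> parity_ray (nat_dist c (c + ?k))"
      by (simp add: nat_dist_add_right)
    then have "parity_ray ?k \<inter> parity_ray (nat_dist c (c + ?k)) \<subseteq> parity_ray ?k \<inter> parity_ray ?m"
      by (rule maximality)
    then have "parity_ray ?k \<subseteq> parity_ray ?m"
      by (simp add: nat_dist_add_right)
    then show "?m \<le> ?k \<and> even (?k + ?m)"
      by (simp add: parity_ray_subset_iff)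
  next
    assume "?m \<le> ?k \<and> even (?k + ?m)"
    then have "parity_ray ?k \<inter> parity_ray ?m = parity_ray ?k"
      by (simp add: Int_absorb2 parity_ray_subset_iff)
    then show "arrow_prop nat_line a b c d"
      unfolding maximal using start_in_parity_ray[of ?k] by auto
  qed
qed

theorem theorem18:
  fixes a b c d :: nat
  shows "analogy nat_line a b c d \<longleftrightarrow> \<bar>int a - int b\<bar> = \<bar>int c - int d\<bar>"
proof -
  have "analogy nat_line a b c d \<longleftrightarrow> nat_dist a b = nat_dist c d"
    unfolding analogy_def arrow_prop_nat_line_iff by (auto simp: nat_dist_commute)
  also have "\<dots> \<longleftrightarrow> \<bar>int a - int b\<bar> = \<bar>int c - int d\<bar>"
    by (simp flip: int_nat_dist)
  finally show ?thesis .
qed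

end
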